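(* Let $m\ge 1$ and $Q\ge 0$ be integers, and let $\mathcal{S}_Q=\{s\in\mathbb{N}^m : s_i\le Q \text{ for all } i=1,\dots,m\}$. For a real matrix $A\in\mathbb{R}^{(m+1)\times m}$ and a state $s\in\mathbb{N}^m$, let $\pi(A)(s)=\mathrm{softmax}(As)\in\mathbb{R}^{m+1}$, where $\mathrm{softmax}(z)_j=e^{z_j}/\sum_{k=1}^{m+1}e^{z_k}$; this is a probability distribution over the $m+1$ actions $\{1,\dots,m+1\}$ (action $i\le m$ means serving queue $i$, action $m+1$ means idling). Let the priority policy $\pi_P$ be the deterministic policy which, at a state $s\in\mathbb{N}^m$ with $s\neq 0$, chooses action $j(s)=\min\{i : s_i>0\}$ with probability one, i.e. $\pi_P(s)=e_{j(s)}$, the $j(s)$-th standard unit vector of $\mathbb{R}^{m+1}$. For $k\ge 0$ define $A_k\in\mathbb{R}^{(m+1)\times m}$ by $(A_k)_{ii}=(Q+1)^{m-i+1}k+1$ for $i=1,\dots,m$ and $(A_k)_{il}=1$ for all other entries (including the whole last row $i=m+1$), and let $\pi_k=\pi(A_k)$. Then: (1) $\pi_0$ is the uniform policy: $\pi_0(s)=\frac{1}{m+1}(1,\dots,1)^\top$ for every $s\in\mathbb{N}^m$. (2) For every $s\in\mathcal{S}_Q$ with $s\neq 0$, $\pi_k(s)\to\pi_P(s)$ as $k\to\infty$. (3) There is no sequence of matrices $A'_k\in\mathbb{R}^{(m+1)\times m}$ with uniformly bounded entries (i.e. $\sup_k\max_{i,l}|(A'_k)_{il}|<\infty$) such that $\pi(A'_k)(s)\to\pi_P(s)$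 as $k\to\infty$ for every $s\in\mathcal{S}_Q$ with $s\neq 0$.
   Context: Setting: a single-server system with $m$ parallel queues; the observable state $s\in\mathbb{N}^m$ records the number of jobs in each queue, and queues are indexed so that $c_1\mu_1\ge c_2\mu_2\ge\dots\ge c_m\mu_m$ (holding cost $c_i$, service rate $\mu_i$), so the priority ($c$-$\mu$) policy serves the lowest-indexed nonempty queue. Policies are parameterized linearly through a softmax as in the claim. *)

theory Defs
  imports Complex_Main
begin

text \<open>Conventions: queues are indexed 1..m, actions 1..m+1 (action m+1 = idle).
  A state s in N^m is a function nat => nat vanishing outside {1..m}.
  A matrix in R^((m+1) x m) is a function nat => nat => real, only entries
  with row in {1..m+1} and column in {1..m} are used.\<close>

definition state_space :: "nat \<Rightarrow> nat \<Rightarrow> (nat \<Rightarrow> nat) set" where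
  "state_space m Q = {s. (\<forall>i\<in>{1..m}. s i \<le> Q) \<and> (\<forall>i. i \<notin> {1..m} \<longrightarrow> s i = 0)}"

definition logit :: "(nat \<Rightarrow> nat \<Rightarrow> real) \<Rightarrow> nat \<Rightarrow> (nat \<Rightarrow> nat) \<Rightarrow> nat \<Rightarrow> real" where
  "logit A m s j = (\<Sum>l=1..m. A j l * real (s l))"

definition softmax_policy :: "(nat \<Rightarrow> nat \<Rightarrow> real) \<Rightarrow> nat \<Rightarrow> (nat \<Rightarrow> nat) \<Rightarrow> nat \<Rightarrow> real" where
  "softmax_policy A m s j = exp (logit A m s j) / (\<Sum>k=1..m+1. exp (logit A m s k))"

definition prio_action :: "nat \<Rightarrow> (nat \<Rightarrow> nat) \<Rightarrow> nat" where
  "prio_action m s = (LEAST i. 1 \<le> i \<and> i \<le> m \<and> 0 < s i)"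

definition priority_policy :: "nat \<Rightarrow> (nat \<Rightarrow> nat) \<Rightarrow> nat \<Rightarrow> real" where
  "priority_policy m s j = (if j = prio_action m s then 1 else 0)"

definition A_seq :: "nat \<Rightarrow> nat \<Rightarrow> nat \<Rightarrow> nat \<Rightarrow> nat \<Rightarrow> real" where
  "A_seq m Q k i l =
     (if i = l \<and> 1 \<le> i \<and> i \<le> m then real ((Q+1) ^ (m - i + 1)) * real k + 1 else 1)"

end

theory Submission
  imports Defs
begin

text \<open>Under A_seq m Q k the logit of action i at state s is k (Q+1)^(m-i+1) s i plus a
  term common to all actions. Since every s i \<le> Q, the weights (Q+1)^(m-i+1) s i are the
  digits of a base Q+1 expansion, so the weight of the first nonempty queue strictly exceeds
  all others and the softmax concentrates on it as k grows. Conversely, bounded matrices give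
  bounded logits at the unit state e1, hence a probability of idling bounded away from zero,
  whereas the priority policy never idles there.\<close>

lemma softmax_denominator_pos: "0 < (\<Sum>k=1..m+1. exp (logit A m s k))"
  by (rule sum_pos) auto

lemma sum_softmax_policy: "(\<Sum>j=1..m+1. softmax_policy A m s j) = 1"
  using softmax_denominator_pos[of A m s]
  unfolding softmax_policy_def by (simp add: sum_divide_distrib[symmetric])

lemma softmax_policy_nonneg: "0 \<le> softmax_policy A m s j"
  using softmax_denominator_pos[of A m s] unfolding softmax_policy_def by simp

lemma softmax_policy_le_exp_logit_diff:
  assumes "p \<in> {1..m+1}"
  shows "softmax_policy A m s j \<le> exp (logit A m s j - logit A m s p)"
proof -
  have "exp (logit A m s p) \<le> (\<Sum>k=1..m+1. exp (logit A m s k))"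
    using assms by (intro member_le_sum) auto
  then have "exp (logit A m s j) / (\<Sum>k=1..m+1. exp (logit A m s k))
      \<le> exp (logit A m s j) / exp (logit A m s p)"
    using softmax_denominator_pos[of A m s] by (intro divide_left_mono) auto
  then show ?thesis unfolding softmax_policy_def by (simp add: exp_diff)
qed

lemma softmax_policy_ge_of_abs_logit_le:
  assumes "\<And>i. i \<in> {1..m+1} \<Longrightarrow> \<bar>logit A m s i\<bar> \<le> B" and "j \<in> {1..m+1}"
  shows "exp (- B) / (real (m+1) * exp B) \<le> softmax_policy A m s j"
proof -
  have "(\<Sum>i=1..m+1. exp (logit A m s i)) \<le> (\<Sum>i=1..m+1. exp B)"
    using assms(1) by (intro sum_mono) (simp add: abs_le_iff)
  then have denominator: "(\<Sum>i=1..m+1. exp (logit A m s i)) \<le> real (m+1) * exp B"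
    by simp
  have numerator: "exp (- B) \<le> exp (logit A m s j)"
    using assms(1)[OF assms(2)] by (simp add: abs_le_iff)
  have "exp (- B) / (real (m+1) * exp B) \<le> exp (logit A m s j) / (real (m+1) * exp B)"
    using numerator by (intro divide_right_mono) auto
  also have "\<dots> \<le> exp (logit A m s j) / (\<Sum>i=1..m+1. exp (logit A m s i))"
    using denominator softmax_denominator_pos[of A m s] by (intro divide_left_mono) auto
  finally show ?thesis unfolding softmax_policy_def .
qed

lemma softmax_policy_tendsto_unit:
  assumes p: "p \<in> {1..m+1}"
    and gap: "\<And>i. i \<in> {1..m+1} \<Longrightarrow> i \<noteq> p \<Longrightarrow>
      filterlim (\<lambda>k. logit (A k) m s p - logit (A k) m s i) at_top F"
    and j: "j \<in> {1..m+1}"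
  shows "((\<lambda>k. softmax_policy (A k) m s j) \<longlongrightarrow> (if j = p then 1 else 0)) F"
proof -
  have others: "((\<lambda>k. softmax_policy (A k) m s i) \<longlongrightarrow> 0) F"
    if i: "i \<in> {1..m+1}" "i \<noteq> p" for i
  proof (rule tendsto_sandwich[OF _ _ tendsto_const])
    have "filterlim (\<lambda>k. logit (A k) m s i - logit (A k) m s p) at_bot F"
      using gap[OF i] by (subst (asm) filterlim_uminus_at_top) simp
    then show "((\<lambda>k. exp (logit (A k) m s i - logit (A k) m s p)) \<longlongrightarrow> 0) F"
      by (rule filterlim_compose[OF exp_at_bot])
    show "\<forall>\<^sub>F k in F. 0 \<le> softmax_policy (A k) m s i"
      by (simp add: softmax_policy_nonneg)
    show "\<forall>\<^sub>F k in F. softmax_policy (A k) m s i \<le> exp (logit (A k) m s i - logit (A k) m s p)"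
      using p by (simp add: softmax_policy_le_exp_logit_diff)
  qed
  have "softmax_policy (A k) m s p = 1 - (\<Sum>i\<in>{1..m+1}-{p}. softmax_policy (A k) m s i)" for k
    using sum.remove[of "{1..m+1}" p "softmax_policy (A k) m s"] p sum_softmax_policy[of "A k" m s]
    by simp
  moreover have "((\<lambda>k. 1 - (\<Sum>i\<in>{1..m+1}-{p}. softmax_policy (A k) m s i)) \<longlongrightarrow> 1 - 0) F"
    using others by (intro tendsto_diff tendsto_const tendsto_null_sum) auto
  ultimately have "((\<lambda>k. softmax_policy (A k) m s p) \<longlongrightarrow> 1) F"
    by simp
  then show ?thesis
    using others j by auto
qed

lemma softmax_policy_A_seq_zero:
  assumes "j \<in> {1..m+1}"
  shows "softmax_policy (A_seq m Q 0) m s j = 1 / real (m + 1)"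
proof -
  have "logit (A_seq m Q 0) m s i = (\<Sum>l=1..m. real (s l))" for i
    unfolding logit_def by (intro sum.cong) (auto simp: A_seq_def)
  then show ?thesis
    unfolding softmax_policy_def by simp
qed

definition priority_weight :: "nat \<Rightarrow> nat \<Rightarrow> (nat \<Rightarrow> nat) \<Rightarrow> nat \<Rightarrow> nat" where
  "priority_weight m Q s i = (if i \<le> m then (Q+1)^(m-i+1) * s i else 0)"

lemma logit_A_seq:
  assumes "i \<in> {1..m+1}"
  shows "logit (A_seq m Q k) m s i =
    real k * real (priority_weight m Q s i) + (\<Sum>l=1..m. real (s l))"
proof -
  have "A_seq m Q k i l * real (s l) = real (s l) +
      (if l = i \<and> i \<le> m then real k * real ((Q+1)^(m-i+1) * s l) else 0)" for l
    using assms by (auto simp: A_seq_def algebra_simps)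
  then have "logit (A_seq m Q k) m s i = (\<Sum>l=1..m. real (s l)) +
      (\<Sum>l=1..m. if l = i \<and> i \<le> m then real k * real ((Q+1)^(m-i+1) * s l) else 0)"
    unfolding logit_def by (simp add: sum.distrib)
  also have "(\<Sum>l=1..m. if l = i \<and> i \<le> m then real k * real ((Q+1)^(m-i+1) * s l) else 0)
      = real k * real (priority_weight m Q s i)"
    using assms by (cases "i \<le> m") (auto simp: priority_weight_def)
  finally show ?thesis by simp
qed

lemma prio_action_nonempty:
  assumes "s \<in> state_space m Q" and "s \<noteq> (\<lambda>_. 0)"
  shows "1 \<le> prio_action m s \<and> prio_action m s \<le> m \<and> 0 < s (prio_action m s)"
proof -
  obtain i where "s i \<noteq> 0"
    using assms(2) by auto
  then have "1 \<le> i \<and> i \<le> m \<and> 0 < s i"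
    using assms(1) unfolding state_space_def by auto
  then show ?thesis
    unfolding prio_action_def by (rule LeastI)
qed

lemma prio_action_least:
  assumes "1 \<le> i" and "i < prio_action m s" and "prio_action m s \<le> m"
  shows "s i = 0"
  using not_less_Least[of i "\<lambda>i. 1 \<le> i \<and> i \<le> m \<and> 0 < s i"] assms
  unfolding prio_action_def by auto

lemma priority_weight_less_prio_action:
  assumes s: "s \<in> state_space m Q" "s \<noteq> (\<lambda>_. 0)"
    and i: "i \<in> {1..m+1}" "i \<noteq> prio_action m s"
  shows "priority_weight m Q s i < priority_weight m Q s (prio_action m s)"
proof -
  define p where "p = prio_action m s"
  have p: "1 \<le> p" "p \<le> m" "0 < s p"
    using prio_action_nonempty[OF s] unfolding p_def by auto
  have "(Q+1)^(m-p+1) \<le> priority_weight m Q s p"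
    using p by (simp add: priority_weight_def)
  moreover have "priority_weight m Q s i < (Q+1)^(m-p+1)"
  proof (cases "i < p \<or> i = m + 1")
    case True
    then have "priority_weight m Q s i = 0"
      using prio_action_least[of i m s] i p by (auto simp: p_def priority_weight_def)
    then show ?thesis by simp
  next
    case False
    then have "p < i" "i \<le> m"
      using i by (auto simp: p_def)
    have "s i \<le> Q"
      using s(1) \<open>i \<le> m\<close> i unfolding state_space_def by auto
    have "priority_weight m Q s i = (Q+1)^(m-i+1) * s i"
      using \<open>i \<le> m\<close> by (simp add: priority_weight_def)
    also have "\<dots> < (Q+1)^(m-i+1) * (Q+1)"
      using \<open>s i \<le> Q\<close> by (intro mult_strict_left_mono) auto
    also have "\<dots> = (Q+1)^(m-i+2)"
      by simp
    also have "\<dots> \<le> (Q+1)^(m-p+1)"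
      using \<open>p < i\<close> \<open>i \<le> m\<close> by (intro power_increasing) auto
    finally show ?thesis .
  qed
  ultimately show ?thesis
    unfolding p_def by linarith
qed

lemma A_seq_tendsto_priority_policy:
  assumes s: "s \<in> state_space m Q" "s \<noteq> (\<lambda>_. 0)" and j: "j \<in> {1..m+1}"
  shows "(\<lambda>k. softmax_policy (A_seq m Q k) m s j) \<longlonglongrightarrow> priority_policy m s j"
proof -
  define p where "p = prio_action m s"
  have p: "p \<in> {1..m+1}"
    using prio_action_nonempty[OF s] unfolding p_def by auto
  have gap: "filterlim (\<lambda>k. logit (A_seq m Q k) m s p - logit (A_seq m Q k) m s i)
      at_top sequentially" if i: "i \<in> {1..m+1}" "i \<noteq> p" for i
  proof -
    have "0 < real (priority_weight m Q s p) - real (priority_weight m Q s i)"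
      using priority_weight_less_prio_action[OF s i[unfolded p_def]] by (simp add: p_def)
    then have "filterlim (\<lambda>k. (real (priority_weight m Q s p) - real (priority_weight m Q s i))
        * real k) at_top sequentially"
      by (intro filterlim_tendsto_pos_mult_at_top[OF tendsto_const _ filterlim_real_sequentially])
    then show ?thesis
      using i p by (simp add: logit_A_seq algebra_simps)
  qed
  show ?thesis
    using softmax_policy_tendsto_unit[OF p gap j] unfolding priority_policy_def p_def by simp
qed

lemma bounded_softmax_not_tendsto_priority_policy:
  assumes "m \<ge> 1" and "Q \<ge> 1"
    and bounded: "\<And>k i l. i \<in> {1..m+1} \<Longrightarrow> l \<in> {1..m} \<Longrightarrow> \<bar>A k i l\<bar> \<le> B"
  shows "\<exists>s\<in>state_space m Q. s \<noteq> (\<lambda>_. 0) \<and> (\<exists>j\<in>{1..m+1}.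
    \<not> (\<lambda>k. softmax_policy (A k) m s j) \<longlonglongrightarrow> priority_policy m s j)"
proof -
  define e1 :: "nat \<Rightarrow> nat" where "e1 i = (if i = 1 then 1 else 0)" for i
  have e1: "e1 \<in> state_space m Q" "e1 \<noteq> (\<lambda>_. 0)"
    using assms(1,2) unfolding state_space_def e1_def by (auto dest: fun_cong[of _ _ 1])
  have "prio_action m e1 = 1"
    unfolding prio_action_def using assms(1) by (intro Least_equality) (auto simp: e1_def)
  then have idle: "priority_policy m e1 (m+1) = 0"
    using assms(1) by (simp add: priority_policy_def)
  have "logit (A k) m e1 i = A k i 1" for k i
    using assms(1) by (simp add: logit_def e1_def if_distrib sum.delta cong: if_cong)
  then have "exp (- B) / (real (m+1) * exp B) \<le> softmax_policy (A k) m e1 (m+1)" for k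
    using assms(1) by (intro softmax_policy_ge_of_abs_logit_le) (auto intro: bounded)
  moreover have "0 < exp (- B) / (real (m+1) * exp B)"
    by simp
  ultimately have "\<not> (\<lambda>k. softmax_policy (A k) m e1 (m+1)) \<longlonglongrightarrow> 0"
    using LIMSEQ_le_const[of _ 0] by (meson not_le)
  then show ?thesis
    using e1 idle by (intro bexI[of _ e1] conjI bexI[of _ "m+1"]) auto
qed

theorem theorem2:
  fixes m Q :: nat
  assumes "m \<ge> 1" and "Q \<ge> 1"
  shows "(\<forall>s. (\<forall>i. i \<notin> {1..m} \<longrightarrow> s i = 0) \<longrightarrow>
            (\<forall>j\<in>{1..m+1}. softmax_policy (A_seq m Q 0) m s j = 1 / real (m + 1)))
    \<and> (\<forall>s\<in>state_space m Q. s \<noteq> (\<lambda>_. 0) \<longrightarrow>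
         (\<forall>j\<in>{1..m+1}. (\<lambda>k. softmax_policy (A_seq m Q k) m s j) \<longlonglongrightarrow> priority_policy m s j))
    \<and> \<not> (\<exists>A' :: nat \<Rightarrow> nat \<Rightarrow> nat \<Rightarrow> real.
           (\<exists>B. \<forall>k. \<forall>i\<in>{1..m+1}. \<forall>l\<in>{1..m}. \<bar>A' k i l\<bar> \<le> B)
         \<and> (\<forall>s\<in>state_space m Q. s \<noteq> (\<lambda>_. 0) \<longrightarrow>
              (\<forall>j\<in>{1..m+1}. (\<lambda>k. softmax_policy (A' k) m s j) \<longlonglongrightarrow> priority_policy m s j)))"
  using softmax_policy_A_seq_zero A_seq_tendsto_priority_policy
    bounded_softmax_not_tendsto_priority_policy[OF assms]
  by blast

end
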